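(* Let $r\ge1$, $\mu\in\mathcal P_r$, $n\in\mathbb N$ and $\mathbf p\in\Pi_n$. If $r=1$ or ${\rm supp}\,\mu$ is connected, then there exists $\mathbf x\in\Xi_n$ minimizing $\mathbf y\mapsto d_r(\delta^{\mathbf p}_{\mathbf y},\mu)$ over $\Xi_n$ such that ${\rm supp}\,\delta^{\mathbf p}_{\mathbf x}\subset{\rm supp}\,\mu$.
   Context: $\mathcal P$ denotes the set of Borel probability measures on $\mathbb R$; $\mathcal P_r=\{\mu\in\mathcal P:\int|x|^r{\rm d}\mu(x)<\infty\}$. For $\mu\in\mathcal P$, $F_\mu(x)=\mu(]-\infty,x])$ and $F_\mu^{-1}(t)=\sup\{x: F_\mu(x)\le t\}$, $t\in]0,1[$; ${\rm supp}$ denotes support. $d_r(\mu,\nu)=\big(\int_0^1|F_\mu^{-1}(t)-F_\nu^{-1}(t)|^r{\rm d}t\big)^{1/r}$. $\Xi_n=\{\mathbf x\in\mathbb R^n:x_1\le\dots\le x_n\}$, $\Pi_n=\{\mathbf p\in\mathbb R^n:p_i\ge0,\sum_ip_i=1\}$, $\delta^{\mathbf p}_{\mathbf x}=\sum_ip_i\delta_{x_i}$. *)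

theory Defs
  imports "HOL-Probability.Probability"
begin

definition prob_real :: "real measure \<Rightarrow> bool" where
  "prob_real M \<longleftrightarrow> prob_space M \<and> sets M = sets borel"

definition prob_real_r :: "real \<Rightarrow> real measure \<Rightarrow> bool" where
  "prob_real_r r M \<longleftrightarrow> prob_real M \<and> integrable M (\<lambda>x. \<bar>x\<bar> powr r)"

definition cdf_of :: "real measure \<Rightarrow> real \<Rightarrow> real" where
  "cdf_of M x = measure M {..x}"

definition quantile :: "real measure \<Rightarrow> real \<Rightarrow> real" where
  "quantile M t = Sup {x. cdf_of M x \<le> t}"

definition d_r :: "real \<Rightarrow> real measure \<Rightarrow> real measure \<Rightarrow> real" where
  "d_r r M N = (LBINT t:{0<..<1}. \<bar>quantile M t - quantile N t\<bar> powr r) powr (1 / r)"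

definition supp :: "real measure \<Rightarrow> real set" where
  "supp M = {x. \<forall>e>0. emeasure M {x - e<..<x + e} > 0}"

definition Xi :: "nat \<Rightarrow> real list set" where
  "Xi n = {xs. length xs = n \<and> sorted xs}"

definition Pi_simplex :: "nat \<Rightarrow> real list set" where
  "Pi_simplex n = {ps. length ps = n \<and> (\<forall>i<n. ps ! i \<ge> 0) \<and> sum_list ps = 1}"

definition discr :: "real list \<Rightarrow> real list \<Rightarrow> real measure" where
  "discr ps xs = measure_of UNIV (sets borel)
     (\<lambda>A. \<Sum>i<length xs. ennreal (ps ! i) * indicator A (xs ! i))"

end

theory Submission
  imports Defs
begin

text \<open>On the cell of quantile levels between \<open>p\<^sub>1 + \<dots> + p\<^sub>i\<^sub>-\<^sub>1\<close> and
  \<open>p\<^sub>1 + \<dots> + p\<^sub>i\<close> the quantile function of \<open>\<delta>\<^sup>p\<^sub>x\<close> is the constant \<open>x\<^sub>i\<close>,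
  so \<open>d\<^sub>r(\<delta>\<^sup>p\<^sub>x, \<mu>)\<^sup>r\<close> splits into a sum of independent one-point costs
  \<open>\<integral> \<bar>x\<^sub>i - F\<^sub>\<mu>\<^sup>-\<^sup>1(t)\<bar>\<^sup>r dt\<close> over the cells. Each cost is convex and coercive, so it attains its
  minimum, and projecting a minimizer onto the closed convex hull of the quantile values on the cell
  does not increase it; for \<open>r = 1\<close> the quantile at the midpoint of the cell, a median, is itself a
  minimizer. These hulls are ordered along the cells because \<open>F\<^sub>\<mu>\<^sup>-\<^sup>1\<close> is nondecreasing, so
  the chosen points are sorted, and cells of zero weight can be filled in monotonically. Quantiles lie
  in \<open>supp \<mu>\<close>, and so does their closed convex hull when \<open>supp \<mu>\<close> is connected.\<close>

section \<open>Discrete measures\<close>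

lemma emeasure_discr:
  assumes "A \<in> sets borel"
  shows "emeasure (discr ps xs) A = (\<Sum>i<length xs. ennreal (ps ! i) * indicator A (xs ! i))"
  unfolding discr_def
proof (rule emeasure_measure_of_sigma)
  show "sigma_algebra UNIV (sets borel)"
    by (metis sets.sigma_algebra_axioms space_borel)
  show "positive (sets borel) (\<lambda>A. \<Sum>i<length xs. ennreal (ps ! i) * indicator A (xs ! i))"
    by (simp add: positive_def)
  show "countably_additive (sets borel) (\<lambda>A. \<Sum>i<length xs. ennreal (ps ! i) * indicator A (xs ! i))"
    unfolding countably_additive_def
    by (intro allI impI, subst suminf_sum) (auto simp: suminf_indicator)
qed (fact assms)

lemma sets_discr [simp, measurable_cong]: "sets (discr ps xs) = sets borel"
  unfolding discr_def by (metis sets.sets_measure_of_eq space_borel)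

lemma cdf_discr:
  assumes "\<And>i. i < length xs \<Longrightarrow> 0 \<le> ps ! i"
  shows "cdf_of (discr ps xs) x = (\<Sum>i<length xs. ps ! i * indicator {..x} (xs ! i))"
proof -
  have "emeasure (discr ps xs) {..x} = ennreal (\<Sum>i<length xs. ps ! i * indicator {..x} (xs ! i))"
    unfolding emeasure_discr[OF atMost_borel]
    by (subst sum_ennreal[symmetric]) (auto simp: assms ennreal_mult ennreal_indicator)
  moreover have "0 \<le> (\<Sum>i<length xs. ps ! i * indicator {..x} (xs ! i))"
    using assms by (intro sum_nonneg) simp
  ultimately show ?thesis
    by (simp add: cdf_of_def measure_def)
qed

lemma sum_lessThan_if_less: "(k::nat) \<le> n \<Longrightarrow> (\<Sum>j<n. if j < k then g j else 0) = (\<Sum>j<k. g j :: real)"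
  by (rule sum.mono_neutral_cong_right) auto

lemma quantile_discr:
  assumes nonneg: "\<And>i. i < length xs \<Longrightarrow> 0 \<le> ps ! i" and "sorted xs" and i: "i < length xs"
    and lower: "(\<Sum>j<i. ps ! j) \<le> t" and upper: "t < (\<Sum>j<Suc i. ps ! j)"
  shows "quantile (discr ps xs) t = xs ! i"
proof -
  let ?n = "length xs"
  have "{x. cdf_of (discr ps xs) x \<le> t} = {..<xs ! i}"
  proof (intro set_eqI iffI)
    fix x assume "x \<in> {..<xs ! i}"
    then have "ps ! j * indicator {..x} (xs ! j) \<le> (if j < i then ps ! j else 0)" if "j < ?n" for j
      using that nonneg[of j] sorted_nth_mono[OF \<open>sorted xs\<close>, of i j] by (auto simp: indicator_def)
    then have "(\<Sum>j<?n. ps ! j * indicator {..x} (xs ! j)) \<le> (\<Sum>j<?n. if j < i then ps ! j else 0)"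
      by (intro sum_mono) auto
    then show "x \<in> {x. cdf_of (discr ps xs) x \<le> t}"
      using i lower by (simp add: cdf_discr[OF nonneg] sum_lessThan_if_less)
  next
    fix x assume x: "x \<in> {x. cdf_of (discr ps xs) x \<le> t}"
    show "x \<in> {..<xs ! i}"
    proof (rule ccontr)
      assume "x \<notin> {..<xs ! i}"
      then have "(if j < Suc i then ps ! j else 0) \<le> ps ! j * indicator {..x} (xs ! j)" if "j < ?n" for j
        using that nonneg[of j] sorted_nth_mono[OF \<open>sorted xs\<close>, of j i] i by (auto simp: indicator_def)
      then have "(\<Sum>j<?n. if j < Suc i then ps ! j else 0) \<le> (\<Sum>j<?n. ps ! j * indicator {..x} (xs ! j))"
        by (intro sum_mono) auto
      then show False
        using i x upper by (simp add: cdf_discr[OF nonneg] sum_lessThan_if_less)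
    qed
  qed
  then show ?thesis
    unfolding quantile_def by simp
qed

lemma supp_discr_subset: "supp (discr ps xs) \<subseteq> {xs ! i |i. i < length xs \<and> 0 < ps ! i}"
proof
  fix z assume z: "z \<in> supp (discr ps xs)"
  let ?F = "{xs ! i |i. i < length xs \<and> 0 < ps ! i}"
  show "z \<in> ?F"
  proof (rule ccontr)
    assume "z \<notin> ?F"
    moreover have "open (- ?F)"
      by (simp add: finite_imp_closed open_Compl)
    ultimately obtain e where "0 < e" and e: "ball z e \<subseteq> - ?F"
      by (meson ComplI open_contains_ball)
    have zero: "ennreal (ps ! i) * indicator (ball z e) (xs ! i) = 0" if "i < length xs" for i
      using that e by (cases "0 < ps ! i") (auto simp: indicator_def ennreal_eq_0_iff)
    have "emeasure (discr ps xs) (ball z e) = (\<Sum>i<length xs. ennreal (ps ! i) * indicator (ball z e) (xs ! i))"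
      by (rule emeasure_discr) simp
    also have "\<dots> = 0"
      by (intro sum.neutral) (simp add: zero)
    finally have "emeasure (discr ps xs) (ball z e) = 0" .
    with z \<open>0 < e\<close> show False
      by (auto simp: supp_def ball_eq_greaterThanLessThan)
  qed
qed


section \<open>Quantiles of a distribution on the line\<close>

lemma cdf_of_eq_cdf: "cdf_of M = cdf M"
  by (simp add: cdf_of_def cdf_def fun_eq_iff)

lemma closed_supp:
  assumes "sets M = sets borel"
  shows "closed (supp M)"
  unfolding closed_def open_dist
proof (intro ballI)
  fix x assume "x \<in> - supp M"
  then obtain e where "0 < e" and null: "emeasure M {x - e<..<x + e} = 0"
    unfolding supp_def by auto
  have "y \<notin> supp M" if "dist y x < e / 2" for y
  proof -
    have "{y - e / 2<..<y + e / 2} \<subseteq> {x - e<..<x + e}"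
      using that by (auto simp: dist_real_def abs_if split: if_split_asm)
    then have "emeasure M {y - e / 2<..<y + e / 2} = 0"
      using null emeasure_mono[of _ _ M] assms by (metis le_zero_eq greaterThanLessThan_borel)
    then show ?thesis
      using \<open>0 < e\<close> unfolding supp_def by (auto intro!: exI[of _ "e / 2"])
  qed
  then show "\<exists>d>0. \<forall>y. dist y x < d \<longrightarrow> y \<in> - supp M"
    using \<open>0 < e\<close> by (auto intro!: exI[of _ "e / 2"])
qed

context real_distribution
begin

lemma quantile_eq_Sup: "quantile M t = Sup {x. cdf M x \<le> t}"
  by (simp add: quantile_def cdf_of_eq_cdf)

lemma cdf_le_nonempty: "0 < t \<Longrightarrow> {x. cdf M x \<le> t} \<noteq> {}"
  using order_tendstoD(2)[OF cdf_lim_at_bot, of t]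
  by (auto simp: eventually_at_bot_linorder intro: less_imp_le)

lemma bdd_above_cdf_le: "t < 1 \<Longrightarrow> bdd_above {x. cdf M x \<le> t}"
  using order_tendstoD(1)[OF cdf_lim_at_top_prob, of t]
  by (auto simp: eventually_at_top_linorder bdd_above_def not_le[symmetric])
    (meson linear order_trans)

lemma cdf_le_if_less_quantile:
  assumes "0 < t" "t < 1" "x < quantile M t"
  shows "cdf M x \<le> t"
proof -
  obtain y where "cdf M y \<le> t" "x < y"
    using assms less_cSup_iff[OF cdf_le_nonempty bdd_above_cdf_le] by (auto simp: quantile_eq_Sup)
  then show ?thesis
    using cdf_nondecreasing[of x y] by simp
qed

lemma cdf_gt_if_quantile_less:
  assumes "t < 1" "quantile M t < x"
  shows "t < cdf M x"
  using cSup_upper[OF _ bdd_above_cdf_le[OF assms(1)], of x] assms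
  by (force simp: quantile_eq_Sup)

lemma quantile_mono: "0 < s \<Longrightarrow> s \<le> t \<Longrightarrow> t < 1 \<Longrightarrow> quantile M s \<le> quantile M t"
  unfolding quantile_eq_Sup by (rule cSup_subset_mono[OF cdf_le_nonempty bdd_above_cdf_le]) auto

lemma quantile_in_supp:
  assumes t: "0 < t" "t < 1"
  shows "quantile M t \<in> supp M"
  unfolding supp_def mem_Collect_eq
proof (intro allI impI)
  fix e :: real assume "0 < e"
  let ?q = "quantile M t"
  have "cdf M (?q - e) \<le> t" "t < cdf M (?q + e / 2)"
    using cdf_le_if_less_quantile[OF t] cdf_gt_if_quantile_less[OF t(2)] \<open>0 < e\<close> by auto
  moreover have "measure M {?q - e<..?q + e / 2} = cdf M (?q + e / 2) - cdf M (?q - e)"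
    using \<open>0 < e\<close> by (subst cdf_diff_eq) auto
  ultimately have "0 < emeasure M {?q - e<..?q + e / 2}"
    by (simp add: emeasure_eq_measure)
  also have "\<dots> \<le> emeasure M {?q - e<..<?q + e}"
    using \<open>0 < e\<close> by (intro emeasure_mono) auto
  finally show "0 < emeasure M {?q - e<..<?q + e}" .
qed

lemma borel_measurable_quantile:
  "(\<lambda>t. indicator {0<..<1} t * quantile M t) \<in> borel_measurable borel"
proof -
  have "mono_on {0<..<1} (quantile M)"
    by (auto intro!: mono_onI quantile_mono)
  then have "quantile M \<in> borel_measurable (restrict_space borel {0<..<1})"
    by (rule borel_measurable_mono_on_fnc)
  then have "(\<lambda>t. indicator {0<..<1::real} t *\<^sub>R quantile M t) \<in> borel_measurable borel"
    by (subst borel_measurable_restrict_space_iff[symmetric]) auto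
  then show ?thesis
    by simp
qed

end


lemma closure_convex_hull_subset_connected:
  fixes A S :: "real set"
  assumes "A \<subseteq> S" "connected S" "closed S"
  shows "closure (convex hull A) \<subseteq> S"
proof (rule closure_minimal[OF _ \<open>closed S\<close>])
  have "convex S"
    using \<open>connected S\<close> by (simp add: is_interval_connected_1[symmetric] is_interval_convex_1)
  then show "convex hull A \<subseteq> S"
    by (rule hull_minimal[OF \<open>A \<subseteq> S\<close>])
qed

lemma closure_convex_hull_le:
  fixes A B :: "real set"
  assumes "\<And>a b. a \<in> A \<Longrightarrow> b \<in> B \<Longrightarrow> a \<le> b"
    and x: "x \<in> closure (convex hull A)" and y: "y \<in> closure (convex hull B)"
  shows "x \<le> y"
proof -
  have "closure (convex hull A) \<subseteq> {..b}" if "b \<in> B" for b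
    using that assms(1) by (intro closure_minimal hull_minimal) auto
  with x have "B \<subseteq> {x..}"
    by auto
  then have "closure (convex hull B) \<subseteq> {x..}"
    by (intro closure_minimal hull_minimal) auto
  with y show ?thesis
    by auto
qed


section \<open>The cost of a single quantization point\<close>

lemma abs_diff_powr_le:
  fixes a b r :: real
  assumes "0 \<le> r"
  shows "\<bar>a - b\<bar> powr r \<le> 2 powr r * (\<bar>a\<bar> powr r + \<bar>b\<bar> powr r)"
proof -
  have "\<bar>a - b\<bar> powr r \<le> (2 * max \<bar>a\<bar> \<bar>b\<bar>) powr r"
    using assms by (intro powr_mono2) auto
  also have "\<dots> = 2 powr r * max \<bar>a\<bar> \<bar>b\<bar> powr r"
    by (simp add: powr_mult)
  also have "\<dots> \<le> 2 powr r * (\<bar>a\<bar> powr r + \<bar>b\<bar> powr r)"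
    by (intro mult_left_mono) (auto simp: max_def)
  finally show ?thesis .
qed

lemma abs_le_powr_add_one:
  fixes x r :: real
  assumes "1 \<le> r"
  shows "\<bar>x\<bar> \<le> \<bar>x\<bar> powr r + 1"
proof (cases "\<bar>x\<bar> \<le> 1")
  case False
  then have "\<bar>x\<bar> powr 1 \<le> \<bar>x\<bar> powr r"
    using assms by (intro powr_mono) auto
  then show ?thesis
    by simp
qed (simp add: add_increasing)

lemma convex_on_powr_nonneg:
  fixes r :: real
  assumes "1 \<le> r"
  shows "convex_on {0..} (\<lambda>x. x powr r)"
proof (rule convex_onI)
  fix u x y :: real
  assume u: "0 < u" "u < 1" and xy: "x \<in> {0..}" "y \<in> {0..}"
  have shrink: "(v * z) powr r \<le> v * z powr r" if "0 \<le> v" "v \<le> 1" "0 \<le> z" for v z :: real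
  proof -
    have "v powr r \<le> v"
      using powr_mono'[of 1 r v] that assms by (cases "v = 0") auto
    then show ?thesis
      using that by (simp add: powr_mult mult_right_mono)
  qed
  show "((1 - u) *\<^sub>R x + u *\<^sub>R y) powr r \<le> (1 - u) * x powr r + u * y powr r"
  proof (cases "x = 0 \<or> y = 0")
    case True
    then show ?thesis
      using u xy shrink[of u y] shrink[of "1 - u" x] assms by auto
  next
    case False
    then show ?thesis
      using u xy by (intro convex_onD[OF powr_convex[OF assms]]) auto
  qed
qed simp

lemma convex_on_abs_diff_powr:
  fixes q r :: real
  assumes "1 \<le> r"
  shows "convex_on UNIV (\<lambda>c. \<bar>c - q\<bar> powr r)"
proof (rule convex_onI)
  fix u a b :: real
  assume u: "0 < u" "u < 1"
  have "\<bar>(1 - u) * a + u * b - q\<bar> = \<bar>(1 - u) * (a - q) + u * (b - q)\<bar>"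
    by (simp add: algebra_simps)
  also have "\<dots> \<le> \<bar>(1 - u) * (a - q)\<bar> + \<bar>u * (b - q)\<bar>"
    by (rule abs_triangle_ineq)
  also have "\<dots> = (1 - u) * \<bar>a - q\<bar> + u * \<bar>b - q\<bar>"
    using u by (simp add: abs_mult)
  finally have "\<bar>(1 - u) * a + u * b - q\<bar> powr r \<le> ((1 - u) * \<bar>a - q\<bar> + u * \<bar>b - q\<bar>) powr r"
    using assms by (intro powr_mono2) auto
  also have "\<dots> \<le> (1 - u) * \<bar>a - q\<bar> powr r + u * \<bar>b - q\<bar> powr r"
    using convex_onD[OF convex_on_powr_nonneg[OF assms], of u "\<bar>a - q\<bar>" "\<bar>b - q\<bar>"] u by simp
  finally show "\<bar>(1 - u) *\<^sub>R a + u *\<^sub>R b - q\<bar> powr r \<le> (1 - u) * \<bar>a - q\<bar> powr r + u * \<bar>b - q\<bar> powr r"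
    by simp
qed simp

definition point_cost :: "real \<Rightarrow> real set \<Rightarrow> (real \<Rightarrow> real) \<Rightarrow> real \<Rightarrow> real" where
  "point_cost r J f c = (LBINT t:J. \<bar>c - f t\<bar> powr r)"

lemma point_cost_nonneg: "0 \<le> point_cost r J f c"
  unfolding point_cost_def set_lebesgue_integral_def by (auto intro!: integral_nonneg_AE)

lemma point_cost_empty [simp]: "point_cost r {} f c = 0"
  by (simp add: point_cost_def set_lebesgue_integral_def)

locale point_cost_setting =
  fixes r :: real and J :: "real set" and f :: "real \<Rightarrow> real"
  assumes one_le_r: "1 \<le> r"
    and sets_J [measurable]: "J \<in> sets borel"
    and finite_J: "emeasure lborel J < \<infinity>"
    and measurable_f [measurable]: "f \<in> borel_measurable borel"
    and integrable_f: "set_integrable lborel J (\<lambda>t. \<bar>f t\<bar> powr r)"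
begin

lemma integrable_const: "set_integrable lborel J (\<lambda>_. c)"
  unfolding set_integrable_def using finite_J by (intro integrable_scaleR_left) auto

lemma integrable_abs_diff_powr: "set_integrable lborel J (\<lambda>t. \<bar>c - f t\<bar> powr r)"
proof (rule set_integrable_bound)
  show "set_integrable lborel J (\<lambda>t. 2 powr r * (\<bar>c\<bar> powr r + \<bar>f t\<bar> powr r))"
    using integrable_f integrable_const by (intro set_integrable_mult_right set_integral_add(1))
  show "set_borel_measurable lborel J (\<lambda>t. \<bar>c - f t\<bar> powr r)"
    unfolding set_borel_measurable_def by measurable
  show "AE t in lborel. t \<in> J \<longrightarrow>
      norm (\<bar>c - f t\<bar> powr r) \<le> norm (2 powr r * (\<bar>c\<bar> powr r + \<bar>f t\<bar> powr r))"
    using abs_diff_powr_le one_le_r by simp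
qed

lemma integrable_abs: "set_integrable lborel J (\<lambda>t. \<bar>f t\<bar>)"
proof (rule set_integrable_bound)
  show "set_integrable lborel J (\<lambda>t. \<bar>f t\<bar> powr r + 1)"
    using integrable_f integrable_const by (rule set_integral_add(1))
  show "set_borel_measurable lborel J (\<lambda>t. \<bar>f t\<bar>)"
    unfolding set_borel_measurable_def by measurable
  show "AE t in lborel. t \<in> J \<longrightarrow> norm \<bar>f t\<bar> \<le> norm (\<bar>f t\<bar> powr r + 1)"
    using abs_le_powr_add_one[OF one_le_r] by (simp add: add_increasing)
qed

lemma convex_on_point_cost: "convex_on UNIV (point_cost r J f)"
proof (rule convex_onI)
  fix u x y :: real
  assume u: "0 < u" "u < 1"
  have "point_cost r J f ((1 - u) *\<^sub>R x + u *\<^sub>R y)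
      \<le> (LBINT t:J. (1 - u) * \<bar>x - f t\<bar> powr r + u * \<bar>y - f t\<bar> powr r)"
    unfolding point_cost_def
    using u convex_onD[OF convex_on_abs_diff_powr[OF one_le_r], of u x y]
    by (intro set_integral_mono integrable_abs_diff_powr set_integral_add(1)
        set_integrable_mult_right) auto
  also have "\<dots> = (1 - u) * point_cost r J f x + u * point_cost r J f y"
    unfolding point_cost_def by (simp add: integrable_abs_diff_powr)
  finally show "point_cost r J f ((1 - u) *\<^sub>R x + u *\<^sub>R y)
      \<le> (1 - u) * point_cost r J f x + u * point_cost r J f y" .
qed simp

lemma point_cost_lower_bound:
  "measure lborel J * (\<bar>c\<bar> - 1) - (LBINT t:J. \<bar>f t\<bar>) \<le> point_cost r J f c"
proof -
  have "(LBINT t:J. \<bar>c\<bar> - 1) = measure lborel J * (\<bar>c\<bar> - 1)"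
    using finite_J by (subst set_integral_const) auto
  then have "measure lborel J * (\<bar>c\<bar> - 1) - (LBINT t:J. \<bar>f t\<bar>) = (LBINT t:J. \<bar>c\<bar> - 1 - \<bar>f t\<bar>)"
    by (simp only: set_integral_diff(2)[OF integrable_const integrable_abs])
  also have "\<dots> \<le> point_cost r J f c"
  proof -
    have "\<bar>c\<bar> - 1 - \<bar>f t\<bar> \<le> \<bar>c - f t\<bar> powr r" for t
      using abs_le_powr_add_one[OF one_le_r, of "c - f t"] abs_triangle_ineq2[of c "f t"] by linarith
    then show ?thesis
      unfolding point_cost_def
      by (intro set_integral_mono set_integral_diff(1) integrable_const integrable_abs
          integrable_abs_diff_powr)
  qed
  finally show ?thesis .
qed

lemma point_cost_attains_min:
  assumes "0 < measure lborel J"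
  obtains c where "\<And>d. point_cost r J f c \<le> point_cost r J f d"
proof -
  define m where "m = measure lborel J"
  define K where "K = (LBINT t:J. \<bar>f t\<bar>)"
  define R where "R = (point_cost r J f 0 + K) / m + 1"
  have "0 \<le> K"
    unfolding K_def set_lebesgue_integral_def by (auto intro!: integral_nonneg_AE)
  then have "1 \<le> R"
    using assms point_cost_nonneg by (simp add: R_def m_def)
  have "continuous_on {-R..R} (point_cost r J f)"
    using convex_on_continuous[OF open_UNIV convex_on_point_cost] continuous_on_subset by blast
  then have "\<exists>c \<in> {-R..R}. \<forall>d \<in> {-R..R}. point_cost r J f c \<le> point_cost r J f d"
    using \<open>1 \<le> R\<close> by (intro continuous_attains_inf) auto
  then obtain c where c: "c \<in> {-R..R}" "\<forall>d \<in> {-R..R}. point_cost r J f c \<le> point_cost r J f d"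
    by blast
  have "point_cost r J f c \<le> point_cost r J f d" for d
  proof (cases "d \<in> {-R..R}")
    case False
    then have "m * (R - 1) < m * (\<bar>d\<bar> - 1)"
      using assms by (auto simp: m_def)
    moreover have "m * (R - 1) = point_cost r J f 0 + K"
      using assms by (simp add: R_def m_def)
    ultimately have "point_cost r J f 0 < point_cost r J f d"
      using point_cost_lower_bound[of d] by (simp add: m_def K_def)
    then show ?thesis
      using bspec[OF c(2), of 0] \<open>1 \<le> R\<close> by simp
  qed (use c in simp)
  then show ?thesis
    by (rule that)
qed

lemma point_cost_closest_point_le:
  assumes "closed K" "convex K" "f ` J \<subseteq> K"
  shows "point_cost r J f (closest_point K c) \<le> point_cost r J f c"
proof (cases "J = {}")
  case False
  then have "K \<noteq> {}"
    using assms(3) by blast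
  have "\<bar>closest_point K c - f t\<bar> \<le> \<bar>c - f t\<bar>" if "t \<in> J" for t
    using closest_point_lipschitz[OF assms(2,1) \<open>K \<noteq> {}\<close>, of c "f t"]
      closest_point_self[of "f t" K] that assms(3)
    by (auto simp: dist_real_def)
  then show ?thesis
    unfolding point_cost_def using one_le_r
    by (intro set_integral_mono integrable_abs_diff_powr powr_mono2) auto
qed simp

end

lemma point_cost_median:
  fixes f :: "real \<Rightarrow> real"
  assumes "a < b" and mono: "mono_on {a<..<b} f" and [measurable]: "f \<in> borel_measurable borel"
    and "set_integrable lborel {a<..<b} f"
  shows "point_cost 1 {a<..<b} f (f ((a + b) / 2)) \<le> point_cost 1 {a<..<b} f c"
proof -
  interpret point_cost_setting 1 "{a<..<b}" f
    using assms by unfold_locales (auto simp: set_integrable_abs)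
  define m where "m = (a + b) / 2"
  have m: "a < m" "m < b"
    using \<open>a < b\<close> by (simp_all add: m_def)
  text \<open>\<open>s\<close> is \<open>1\<close> where \<open>f \<le> f m\<close> and \<open>-1\<close> where \<open>f m \<le> f\<close>, so it is a subgradient of
    \<open>\<bar>_ - f t\<bar>\<close> at \<open>f m\<close>; its integral vanishes because \<open>m\<close> halves the interval.\<close>
  define s where "s t = (indicator {a<..<m} t - indicator {m..<b} t :: real)" for t
  have "(LBINT t:{a<..<b}. s t) = integral\<^sup>L lborel s"
    unfolding set_lebesgue_integral_def s_def
    by (intro Bochner_Integration.integral_cong) (use m in \<open>auto split: split_indicator\<close>)
  also have "\<dots> = 0"
    unfolding s_def using m by (subst Bochner_Integration.integral_diff) (auto simp: m_def field_simps)
  finally have s_integral: "(LBINT t:{a<..<b}. s t) = 0" .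
  have s_integrable: "set_integrable lborel {a<..<b} s"
    unfolding set_integrable_def s_def using m
    by (intro integrable_mult_indicator Bochner_Integration.integrable_diff integrable_real_indicator) auto
  have "\<bar>f m - f t\<bar> + (c - f m) * s t \<le> \<bar>c - f t\<bar>" if "t \<in> {a<..<b}" for t
  proof (cases "t < m")
    case True
    then have "f t \<le> f m"
      using that m by (intro mono_onD[OF mono]) auto
    then show ?thesis
      using True that by (simp add: s_def)
  next
    case False
    then have "f m \<le> f t"
      using that m by (intro mono_onD[OF mono]) auto
    then show ?thesis
      using False that by (simp add: s_def)
  qed
  then have "(LBINT t:{a<..<b}. \<bar>f m - f t\<bar> + (c - f m) * s t) \<le> point_cost 1 {a<..<b} f c"
    unfolding point_cost_def using integrable_abs_diff_powr s_integrable
    by (intro set_integral_mono set_integral_add(1) set_integrable_mult_right) auto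
  then show ?thesis
    using integrable_abs_diff_powr[of "f m"] s_integrable s_integral
    by (simp add: point_cost_def m_def)
qed


section \<open>Optimal quantization with fixed weights\<close>

lemma ex_index_bracket:
  fixes s :: "nat \<Rightarrow> 'a::linorder"
  assumes "s 0 \<le> t" "t < s m"
  shows "\<exists>i<m. s i \<le> t \<and> t < s (Suc i)"
  using assms
proof (induction m)
  case (Suc m)
  then show ?case
    by (cases "t < s m") (auto intro: less_SucI)
qed simp

lemma mono_on_extend_nat:
  fixes c :: "nat \<Rightarrow> 'a::linorder"
  assumes "finite P" "P \<noteq> {}" "mono_on P c"
  obtains d where "mono d" "\<And>i. i \<in> P \<Longrightarrow> d i = c i"
proof -
  define k where "k i = Max (insert (Min P) {j \<in> P. j \<le> i})" for i
  have k_in: "k i \<in> P" for i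
    unfolding k_def using assms by (intro subsetD[OF _ Max_in]) auto
  have k_mono: "mono k"
    unfolding k_def using assms by (intro monoI Max_mono) auto
  have "k i = i" if "i \<in> P" for i
    unfolding k_def using assms that by (intro Max_eqI) auto
  moreover have "mono (c \<circ> k)"
    using k_in k_mono assms(3) by (auto intro!: monoI mono_onD[of P c] dest: monoD)
  ultimately show ?thesis
    using that[of "c \<circ> k"] by simp
qed

locale quantization =
  fixes r :: real and \<mu> :: "real measure" and n :: nat and p :: "real list"
  assumes one_le_r: "1 \<le> r"
    and real_distribution: "real_distribution \<mu>"
    and p_simplex: "p \<in> Pi_simplex n"
begin

sublocale \<mu>: real_distribution \<mu>
  by (fact real_distribution)

definition level :: "nat \<Rightarrow> real" where
  "level k = (\<Sum>j<k. p ! j)"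

definition cell :: "nat \<Rightarrow> real set" where
  "cell i = {level i<..<level (Suc i)}"

text \<open>Outside \<open>]0, 1[\<close> the quantile takes junk values; cutting it off there makes \<open>Q\<close>
  Borel measurable.\<close>

definition Q :: "real \<Rightarrow> real" where
  "Q t = indicator {0<..<1} t * quantile \<mu> t"

definition cell_hull :: "nat \<Rightarrow> real set" where
  "cell_hull i = closure (convex hull (quantile \<mu> ` cell i))"

definition quantile_integrable :: bool where
  "quantile_integrable \<longleftrightarrow> set_integrable lborel {0<..<1} (\<lambda>t. \<bar>Q t\<bar> powr r)"

lemma length_p: "length p = n"
  using p_simplex by (simp add: Pi_simplex_def)

lemma p_nonneg: "i < n \<Longrightarrow> 0 \<le> p ! i"
  using p_simplex by (simp add: Pi_simplex_def)

lemma level_0 [simp]: "level 0 = 0"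
  by (simp add: level_def)

lemma level_n: "level n = 1"
  using p_simplex length_p by (simp add: Pi_simplex_def level_def sum_list_sum_nth atLeast0LessThan)

lemma level_Suc: "level (Suc i) = level i + p ! i"
  by (simp add: level_def)

lemma level_mono: "k \<le> l \<Longrightarrow> l \<le> n \<Longrightarrow> level k \<le> level l"
  unfolding level_def by (rule sum_mono2) (auto intro: p_nonneg)

lemma cell_subset: "i < n \<Longrightarrow> cell i \<subseteq> {0<..<1}"
  using level_mono[of 0 i] level_mono[of "Suc i" n] by (auto simp: cell_def level_n)

lemma cell_less:
  assumes "i < j" "j < n" "s \<in> cell i" "t \<in> cell j"
  shows "s < t"
  using level_mono[of "Suc i" j] assms by (auto simp: cell_def)

lemma disjoint_cells: "disjoint_family_on cell {..<n}"
  unfolding disjoint_family_on_def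
proof (intro ballI impI)
  fix i j assume ij: "i \<in> {..<n}" "j \<in> {..<n}" "i \<noteq> j"
  have "t \<notin> cell i \<inter> cell j" for t
    using ij cell_less[of i j t t] cell_less[of j i t t] by (cases "i < j") auto
  then show "cell i \<inter> cell j = {}"
    by blast
qed

lemma unit_interval_minus_cells: "{0<..<1} - (\<Union>i<n. cell i) \<subseteq> level ` {..n}"
proof
  fix t assume t: "t \<in> {0<..<1} - (\<Union>i<n. cell i)"
  then obtain i where "i < n" "level i \<le> t" "t < level (Suc i)"
    using ex_index_bracket[of level t n] by (auto simp: level_n)
  moreover have "t \<notin> cell i"
    using t \<open>i < n\<close> by blast
  ultimately have "t = level i"
    by (auto simp: cell_def)
  with \<open>i < n\<close> show "t \<in> level ` {..n}"
    by simp
qed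

lemma Q_eq: "t \<in> {0<..<1} \<Longrightarrow> Q t = quantile \<mu> t"
  by (simp add: Q_def)

lemma Q_measurable [measurable]: "Q \<in> borel_measurable borel"
  unfolding Q_def[abs_def] by (rule \<mu>.borel_measurable_quantile)

lemma quantile_discr_cell:
  assumes "y \<in> Xi n" "i < n" "level i \<le> t" "t < level (Suc i)"
  shows "quantile (discr p y) t = y ! i"
  using assms length_p p_nonneg by (intro quantile_discr) (auto simp: Xi_def level_def)

lemma quantile_discr_unit_interval:
  assumes "y \<in> Xi n" "t \<in> {0<..<1}"
  shows "\<exists>i<n. quantile (discr p y) t = y ! i"
  using ex_index_bracket[of level t n] assms quantile_discr_cell by (auto simp: level_n)

lemma point_cost_setting_cell:
  assumes quantile_integrable "i < n"
  shows "point_cost_setting r (cell i) Q"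
proof
  show "emeasure lborel (cell i) < \<infinity>"
    by (cases "level i \<le> level (Suc i)") (auto simp: cell_def)
  show "set_integrable lborel (cell i) (\<lambda>t. \<bar>Q t\<bar> powr r)"
    by (rule set_integrable_subset[OF assms(1)[unfolded quantile_integrable_def]])
      (use cell_subset[OF assms(2)] in \<open>auto simp: cell_def\<close>)
qed (auto simp: one_le_r cell_def)

lemma d_r_discr:
  assumes quantile_integrable "y \<in> Xi n"
  shows "d_r r (discr p y) \<mu> = (\<Sum>i<n. point_cost r (cell i) Q (y ! i)) powr (1 / r)"
proof -
  let ?h = "\<lambda>t. \<bar>quantile (discr p y) t - quantile \<mu> t\<bar> powr r"
  have on_cell: "?h t = \<bar>y ! i - Q t\<bar> powr r" if "i < n" "t \<in> cell i" for i t
    using that assms(2) quantile_discr_cell cell_subset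
    by (auto simp: cell_def Q_eq subset_eq)
  have "(LBINT t:{0<..<1}. ?h t) = (LBINT t:(\<Union>i<n. cell i). ?h t)"
    using unit_interval_minus_cells cell_subset
    by (intro set_integral_discrete_difference[where X = "level ` {..n}"]) auto
  also have "\<dots> = (\<Sum>i<n. LBINT t:cell i. ?h t)"
  proof (intro set_integral_finite_Union disjoint_cells)
    fix i assume "i \<in> {..<n}"
    then show "set_integrable lborel (cell i) ?h"
      using point_cost_setting.integrable_abs_diff_powr[OF point_cost_setting_cell[OF assms(1)]]
      by (subst set_integrable_cong[OF refl refl on_cell]) auto
  qed (auto simp: cell_def)
  also have "\<dots> = (\<Sum>i<n. point_cost r (cell i) Q (y ! i))"
    unfolding point_cost_def by (intro sum.cong refl set_lebesgue_integral_cong) (auto simp: on_cell cell_def)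
  finally show ?thesis
    by (simp add: d_r_def)
qed

lemma d_r_discr_eq_0:
  assumes "\<not> quantile_integrable" "y \<in> Xi n"
  shows "d_r r (discr p y) \<mu> = 0"
proof -
  let ?h = "\<lambda>t. \<bar>quantile (discr p y) t - quantile \<mu> t\<bar> powr r"
  define B where "B = (\<Sum>i<n. \<bar>y ! i\<bar>)"
  have "\<not> set_integrable lborel {0<..<1} ?h"
  proof
    assume "set_integrable lborel {0<..<1} ?h"
    then have "set_integrable lborel {0<..<1} (\<lambda>t. 2 powr r * (B powr r + ?h t))"
      by (intro set_integrable_mult_right set_integral_add(1))
        (auto simp: set_integrable_def)
    moreover have "\<bar>Q t\<bar> powr r \<le> 2 powr r * (B powr r + ?h t)" if t: "t \<in> {0<..<1}" for t
    proof -
      obtain i where "i < n" and qi: "quantile (discr p y) t = y ! i"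
        using quantile_discr_unit_interval[OF assms(2) t] by blast
      then have "\<bar>quantile (discr p y) t\<bar> \<le> B"
        unfolding B_def qi by (intro member_le_sum) auto
      then have bound: "\<bar>quantile (discr p y) t\<bar> powr r \<le> B powr r"
        using one_le_r by (intro powr_mono2) auto
      have "\<bar>Q t\<bar> powr r \<le> 2 powr r * (\<bar>quantile (discr p y) t\<bar> powr r + ?h t)"
        using abs_diff_powr_le[of r "quantile (discr p y) t" "quantile (discr p y) t - quantile \<mu> t"]
          one_le_r t by (simp add: Q_eq)
      also have "\<dots> \<le> 2 powr r * (B powr r + ?h t)"
        using bound by (intro mult_left_mono add_right_mono) auto
      finally show ?thesis .
    qed
    ultimately have quantile_integrable
      unfolding quantile_integrable_def
      by (elim set_integrable_bound) (auto simp: set_borel_measurable_def)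
    with assms(1) show False ..
  qed
  then show ?thesis
    unfolding d_r_def set_lebesgue_integral_def set_integrable_def
    by (simp add: not_integrable_integral_eq)
qed

lemma cell_hull_le:
  assumes "i < j" "j < n" "x \<in> cell_hull i" "y \<in> cell_hull j"
  shows "x \<le> y"
proof (rule closure_convex_hull_le[OF _ assms(3,4)[unfolded cell_hull_def]])
  fix a b assume "a \<in> quantile \<mu> ` cell i" "b \<in> quantile \<mu> ` cell j"
  then obtain s t where st: "s \<in> cell i" "t \<in> cell j" "a = quantile \<mu> s" "b = quantile \<mu> t"
    by blast
  moreover have "s < t"
    using cell_less[OF assms(1,2) st(1,2)] .
  moreover have "0 < s" "t < 1"
    using st(1,2) cell_subset[of i] cell_subset[of j] assms(1,2) by auto
  ultimately show "a \<le> b"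
    by (simp add: \<mu>.quantile_mono)
qed

lemma midpoint_in_cell: "0 < p ! i \<Longrightarrow> (level i + level (Suc i)) / 2 \<in> cell i"
  by (simp add: cell_def level_Suc)

lemma quantile_image_subset_cell_hull: "quantile \<mu> ` cell i \<subseteq> cell_hull i"
  unfolding cell_hull_def by (rule order_trans[OF hull_subset closure_subset])

lemma cell_hull_subset_supp:
  assumes "i < n" "connected (supp \<mu>)"
  shows "cell_hull i \<subseteq> supp \<mu>"
  using assms cell_subset[OF assms(1)] \<mu>.quantile_in_supp unfolding cell_hull_def
  by (intro closure_convex_hull_subset_connected closed_supp) auto

lemma median_cell_point:
  assumes quantile_integrable "r = 1" "i < n" "0 < p ! i"
  shows "point_cost r (cell i) Q (quantile \<mu> ((level i + level (Suc i)) / 2)) \<le> point_cost r (cell i) Q d"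
proof -
  interpret point_cost_setting r "cell i" Q
    using point_cost_setting_cell[OF assms(1,3)] .
  have "set_borel_measurable lborel (cell i) Q"
    unfolding set_borel_measurable_def cell_def by measurable
  then have "set_integrable lborel (cell i) Q"
    using integrable_abs set_integrable_abs_iff by blast
  moreover have "Q ((level i + level (Suc i)) / 2) = quantile \<mu> ((level i + level (Suc i)) / 2)"
    using midpoint_in_cell[OF assms(4)] cell_subset[OF assms(3)] by (auto simp: Q_eq)
  moreover have "mono_on (cell i) Q"
    using cell_subset[OF assms(3)] by (auto simp: Q_eq subset_eq intro!: mono_onI \<mu>.quantile_mono)
  moreover have "level i < level (Suc i)"
    using assms(4) by (simp add: level_Suc)
  ultimately show ?thesis
    using point_cost_median[of "level i" "level (Suc i)" Q d] assms(2) by (simp add: cell_def)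
qed

lemma projected_cell_point:
  assumes quantile_integrable "connected (supp \<mu>)" "i < n" "0 < p ! i"
  obtains c where "c \<in> cell_hull i" "c \<in> supp \<mu>"
    "\<And>d. point_cost r (cell i) Q c \<le> point_cost r (cell i) Q d"
proof -
  interpret point_cost_setting r "cell i" Q
    using point_cost_setting_cell[OF assms(1,3)] .
  obtain c0 where c0: "\<And>d. point_cost r (cell i) Q c0 \<le> point_cost r (cell i) Q d"
    using point_cost_attains_min assms(4) by (auto simp: cell_def level_Suc)
  define c where "c = closest_point (cell_hull i) c0"
  have "Q ` cell i \<subseteq> cell_hull i"
    using quantile_image_subset_cell_hull cell_subset[OF assms(3)] by (auto simp: Q_eq subset_eq)
  then have "point_cost r (cell i) Q c \<le> point_cost r (cell i) Q c0"
    unfolding c_def cell_hull_def by (intro point_cost_closest_point_le convex_closure) auto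
  moreover have "c \<in> cell_hull i"
    using midpoint_in_cell[OF assms(4)] quantile_image_subset_cell_hull
    unfolding c_def cell_hull_def by (intro closest_point_in_set) auto
  ultimately show ?thesis
    using that c0 cell_hull_subset_supp[OF assms(3,2)] order_trans by blast
qed

lemma optimal_cell_point:
  assumes "r = 1 \<or> connected (supp \<mu>)" "i < n" "0 < p ! i"
  shows "\<exists>c \<in> cell_hull i. c \<in> supp \<mu> \<and>
    (quantile_integrable \<longrightarrow> (\<forall>d. point_cost r (cell i) Q c \<le> point_cost r (cell i) Q d))"
proof -
  let ?c = "quantile \<mu> ((level i + level (Suc i)) / 2)"
  have median: "?c \<in> cell_hull i" "?c \<in> supp \<mu>"
    using midpoint_in_cell[OF assms(3)] cell_subset[OF assms(2)] quantile_image_subset_cell_hull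
    by (auto intro!: \<mu>.quantile_in_supp)
  consider "r = 1 \<or> \<not> quantile_integrable" | "connected (supp \<mu>)" quantile_integrable
    using assms(1) by blast
  then show ?thesis
  proof cases
    case 1
    then show ?thesis
      using median median_cell_point[OF _ _ assms(2,3)] by blast
  next
    case 2
    then show ?thesis
      using projected_cell_point[OF 2(2,1) assms(2,3)] by metis
  qed
qed

lemma ex_positive_weight: "\<exists>i<n. 0 < p ! i"
proof (rule ccontr)
  assume "\<not> (\<exists>i<n. 0 < p ! i)"
  then have "level n = 0"
    using p_nonneg by (force simp: level_def intro!: sum.neutral)
  then show False
    by (simp add: level_n)
qed

theorem optimal_quantizer_in_supp:
  assumes "r = 1 \<or> connected (supp \<mu>)"
  shows "\<exists>x \<in> Xi n. (\<forall>y \<in> Xi n. d_r r (discr p x) \<mu> \<le> d_r r (discr p y) \<mu>)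
           \<and> supp (discr p x) \<subseteq> supp \<mu>"
proof -
  define P where "P = {i. i < n \<and> 0 < p ! i}"
  have "P \<noteq> {}"
    using ex_positive_weight by (auto simp: P_def)
  have "\<exists>c. \<forall>i \<in> P. c i \<in> cell_hull i \<and> c i \<in> supp \<mu> \<and>
      (quantile_integrable \<longrightarrow> (\<forall>d. point_cost r (cell i) Q (c i) \<le> point_cost r (cell i) Q d))"
    using optimal_cell_point[OF assms] unfolding P_def by (intro bchoice) blast
  then obtain c where c: "\<And>i. i \<in> P \<Longrightarrow> c i \<in> cell_hull i \<and> c i \<in> supp \<mu> \<and>
      (quantile_integrable \<longrightarrow> (\<forall>d. point_cost r (cell i) Q (c i) \<le> point_cost r (cell i) Q d))"
    by blast
  have "mono_on P c"
  proof (rule mono_onI)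
    fix i j assume "i \<in> P" "j \<in> P" "i \<le> j"
    then show "c i \<le> c j"
      using c cell_hull_le[of i j "c i" "c j"] by (cases "i = j") (auto simp: P_def)
  qed
  then obtain e where "mono e" and e: "\<And>i. i \<in> P \<Longrightarrow> e i = c i"
    using mono_on_extend_nat[of P c] \<open>P \<noteq> {}\<close> by (auto simp: P_def)
  define x where "x = map e [0..<n]"
  have "x \<in> Xi n"
    using \<open>mono e\<close> by (auto simp: x_def Xi_def sorted_iff_nth_mono monoD)
  moreover have "supp (discr p x) \<subseteq> supp \<mu>"
    using supp_discr_subset[of p x] c e by (auto simp: x_def P_def)
  moreover have "d_r r (discr p x) \<mu> \<le> d_r r (discr p y) \<mu>" if "y \<in> Xi n" for y
  proof (cases quantile_integrable)
    case True
    have "point_cost r (cell i) Q (x ! i) \<le> point_cost r (cell i) Q (y ! i)" if "i < n" for i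
    proof (cases "i \<in> P")
      case False
      then have "cell i = {}"
        using that p_nonneg[OF that] by (auto simp: P_def cell_def level_Suc)
      then show ?thesis
        by simp
    qed (use True c e that in \<open>auto simp: x_def\<close>)
    then show ?thesis
      using one_le_r \<open>x \<in> Xi n\<close> that True
      by (auto simp: d_r_discr point_cost_nonneg intro!: powr_mono2 sum_mono sum_nonneg)
  qed (use \<open>x \<in> Xi n\<close> that d_r_discr_eq_0 in simp)
  ultimately show ?thesis
    by blast
qed

end

text \<open>The finite moment of \<open>\<mu>\<close> is not needed: it guarantees \<open>quantile_integrable\<close>, and when
  that fails all distances \<open>d_r\<close> to discrete measures are the junk value \<open>0\<close> of the Bochner integral.\<close>

theorem proposition5:
  fixes r :: real and \<mu> :: "real measure" and n :: nat and p :: "real list"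
  assumes "r \<ge> 1"
    and "prob_real_r r \<mu>"
    and "p \<in> Pi_simplex n"
    and "r = 1 \<or> connected (supp \<mu>)"
  shows "\<exists>x \<in> Xi n. (\<forall>y \<in> Xi n. d_r r (discr p x) \<mu> \<le> d_r r (discr p y) \<mu>)
            \<and> supp (discr p x) \<subseteq> supp \<mu>"
proof -
  have "real_distribution \<mu>"
    using assms(2)
    by (simp add: prob_real_r_def prob_real_def real_distribution_def real_distribution_axioms_def)
  then interpret quantization r \<mu> n p
    using assms(1,3) by (intro quantization.intro)
  show ?thesis
    using assms(4) by (rule optimal_quantizer_in_supp)
qed

end
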